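(* For every integer $n\geq -2$, the polynomial $e_1^{n}\,\tilde e_1^{\,n}\in\mathbb{Z}\langle X\rangle$ is a polynomial with Jordan property.
   Context: Rings are associative with $1$; homomorphisms preserve $1$. A Jordan homomorphism $\alpha:R\to R'$ is a map with $(a+b)^\alpha=a^\alpha+b^\alpha$, $1^\alpha=1'$, $(aba)^\alpha=a^\alpha b^\alpha a^\alpha$ for all $a,b\in R$. Let $\mathbb{Z}\langle X\rangle$ be the free $\mathbb{Z}$-algebra on non-commuting indeterminates $x_1,x_2,\ldots$. For a finite or infinite sequence $T=(t_1,t_2,\ldots)$ in a ring $R$, $f(T)$ denotes the image of $f\in\mathbb{Z}\langle X\rangle$ under the homomorphism $x_i\mapsto t_i$ (finite sequences are padded with zeros). A polynomial $f$ has the Jordan property if $f(T)^\alpha=f(T^\alpha)$ for every Jordan homomorphism $\alpha:R\to R'$ between arbitrary rings and every finite or infinite sequence $T$ in $R$, where $T^\alpha=(t_1^\alpha,t_2^\alpha,\ldots)$. Define $e^{(-2)}:=-1$, $e^{(-1)}:=0$, $e^{(0)}:=1$, $e^{(n)}:=e^{(n-1)}x_n-e^{(n-2)}$ for $n\geq1$. Put $e_1^{m}:=e^{(m)}$ for $m\geq-2$, and $\tilde e_1^{\,m}:=e^{(m)}(x_m,x_{m-1},\ldots,x_1)$ (substituting $x_i\mapsto x_{m+1-i}$ for $i\leq m$) for $m\geq1$, $\tilde e_1^{\,m}:=e^{(m)}$ for $-2\leq m\leq 0$. *)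

theory Defs
  imports Main
begin

text \<open>Elements of the free algebra Z<X> over non-commuting indeterminates x_1, x_2, ...,
  represented by polynomial expressions; they are only ever used through evaluation
  (the homomorphism x_i to t_i), which is well defined on Z<X>.\<close>
datatype ncpoly = PVar nat | PConst int | PAdd ncpoly ncpoly | PMul ncpoly ncpoly | PNeg ncpoly

text \<open>f(T): image of f under the ring homomorphism Z<X> to R, x_i to T i (i >= 1).
  A finite sequence is modelled by padding with zeros.\<close>
primrec peval :: "ncpoly \<Rightarrow> (nat \<Rightarrow> 'a::ring_1) \<Rightarrow> 'a" where
  "peval (PVar i) T = T i"
| "peval (PConst c) T = of_int c"
| "peval (PAdd p q) T = peval p T + peval q T"
| "peval (PMul p q) T = peval p T * peval q T"
| "peval (PNeg p) T = - peval p T"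

primrec psubst :: "(nat \<Rightarrow> ncpoly) \<Rightarrow> ncpoly \<Rightarrow> ncpoly" where
  "psubst s (PVar i) = s i"
| "psubst s (PConst c) = PConst c"
| "psubst s (PAdd p q) = PAdd (psubst s p) (psubst s q)"
| "psubst s (PMul p q) = PMul (psubst s p) (psubst s q)"
| "psubst s (PNeg p) = PNeg (psubst s p)"

function epoly :: "int \<Rightarrow> ncpoly" where
  "epoly n = (if n \<le> -2 then PConst (-1)
              else if n = -1 then PConst 0
              else if n = 0 then PConst 1
              else PAdd (PMul (epoly (n - 1)) (PVar (nat n))) (PNeg (epoly (n - 2))))"
  by auto
termination by (relation "measure (\<lambda>n. nat (n + 3))") auto

declare epoly.simps [simp del]

definition e1 :: "int \<Rightarrow> ncpoly" where
  "e1 m = epoly m"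

text \<open>tilde e_1^m = e^(m)(x_m, ..., x_1) for m >= 1, i.e. x_i to x_(m+1-i) for i <= m.\<close>
definition et1 :: "int \<Rightarrow> ncpoly" where
  "et1 m = (if m \<ge> 1
            then psubst (\<lambda>i. if 1 \<le> i \<and> i \<le> nat m then PVar (nat m + 1 - i) else PVar i) (epoly m)
            else epoly m)"

definition jordan_hom :: "('a::ring_1 \<Rightarrow> 'b::ring_1) \<Rightarrow> bool" where
  "jordan_hom \<alpha> \<longleftrightarrow> (\<forall>a b. \<alpha> (a + b) = \<alpha> a + \<alpha> b) \<and> \<alpha> 1 = 1
      \<and> (\<forall>a b. \<alpha> (a * b * a) = \<alpha> a * \<alpha> b * \<alpha> a)"

text \<open>The Jordan property of f is this condition for all rings R, R' (type variables, universally
  quantified at theorem level) and all Jordan homomorphisms alpha.\<close>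
definition jordan_prop_wrt :: "('a::ring_1 \<Rightarrow> 'b::ring_1) \<Rightarrow> ncpoly \<Rightarrow> bool" where
  "jordan_prop_wrt \<alpha> f \<longleftrightarrow> (\<forall>T :: nat \<Rightarrow> 'a. \<alpha> (peval f T) = peval f (\<alpha> \<circ> T))"

end

theory Submission
  imports Defs
begin

text \<open>Write p(k) = e^(k)(T) and q(k) = tilde e_1^k(T). Both are the continuant of t_1, ..., t_k,
  expanded from the right and from the left respectively:
  p(k) = p(k-1) t_k - p(k-2) and q(k) = t_k q(k-1) - q(k-2).
  A Jordan homomorphism alpha preserves aba and, by linearization, abc + cba. Expanding p(k) y q(k)
  with both recurrences, induction on k shows simultaneously that alpha(p(k) y q(k)) = P(k) alpha(y) Q(k),
  where P, Q are the same continuants of T^alpha, and that alpha preserves the mixed terms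
  p(k) ab q(k-1) + p(k-1) ba q(k). The case y = 1 is the theorem.\<close>

lemma jordan_hom_add: "jordan_hom \<alpha> \<Longrightarrow> \<alpha> (a + b) = \<alpha> a + \<alpha> b"
  by (simp add: jordan_hom_def)

lemma jordan_hom_0: "jordan_hom \<alpha> \<Longrightarrow> \<alpha> 0 = 0"
  using jordan_hom_add[of \<alpha> 0 0] by simp

lemma jordan_hom_1: "jordan_hom \<alpha> \<Longrightarrow> \<alpha> 1 = 1"
  by (simp add: jordan_hom_def)

lemma jordan_hom_minus: "jordan_hom \<alpha> \<Longrightarrow> \<alpha> (- a) = - \<alpha> a"
  using jordan_hom_add[of \<alpha> a "- a"] jordan_hom_0[of \<alpha>] by (metis add.right_inverse neg_eq_iff_add_eq_0)

lemma jordan_hom_diff: "jordan_hom \<alpha> \<Longrightarrow> \<alpha> (a - b) = \<alpha> a - \<alpha> b"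
  using jordan_hom_add[of \<alpha> a "- b"] jordan_hom_minus[of \<alpha> b] by simp

lemma jordan_hom_aba: "jordan_hom \<alpha> \<Longrightarrow> \<alpha> (a * b * a) = \<alpha> a * \<alpha> b * \<alpha> a"
  by (simp add: jordan_hom_def)

lemma jordan_hom_abc_cba:
  assumes J: "jordan_hom \<alpha>"
  shows "\<alpha> (a * b * c + c * b * a) = \<alpha> a * \<alpha> b * \<alpha> c + \<alpha> c * \<alpha> b * \<alpha> a"
proof -
  have "(a + c) * b * (a + c) = a * b * a + (a * b * c + c * b * a) + c * b * c"
    by (simp add: algebra_simps)
  then have "\<alpha> ((a + c) * b * (a + c)) = \<alpha> (a * b * a) + \<alpha> (a * b * c + c * b * a) + \<alpha> (c * b * c)"
    using J by (simp add: jordan_hom_add)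
  moreover have "\<alpha> ((a + c) * b * (a + c)) = (\<alpha> a + \<alpha> c) * \<alpha> b * (\<alpha> a + \<alpha> c)"
    using J by (simp add: jordan_hom_aba jordan_hom_add)
  moreover have "(\<alpha> a + \<alpha> c) * \<alpha> b * (\<alpha> a + \<alpha> c)
      = \<alpha> a * \<alpha> b * \<alpha> a + (\<alpha> a * \<alpha> b * \<alpha> c + \<alpha> c * \<alpha> b * \<alpha> a) + \<alpha> c * \<alpha> b * \<alpha> c"
    by (simp add: algebra_simps)
  ultimately show ?thesis
    using J by (simp add: jordan_hom_aba)
qed

text \<open>The value e^(0) = 1 is the instance m = 0 of the recurrence, so only two initial values
  are needed; this is why all recurrences below hold from k = 0 on.\<close>
function continuant :: "(nat \<Rightarrow> 'a::ring_1) \<Rightarrow> int \<Rightarrow> 'a" where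
  "continuant T m = (if m \<le> -2 then -1 else if m = -1 then 0
     else continuant T (m - 1) * T (nat m) - continuant T (m - 2))"
  by auto
termination by (relation "measure (\<lambda>(T, m). nat (m + 3))") auto

declare continuant.simps [simp del]

lemma continuant_below: "m \<le> -2 \<Longrightarrow> continuant T m = -1"
  by (simp add: continuant.simps)

lemma continuant_minus_1 [simp]: "continuant T (-1) = 0"
  by (simp add: continuant.simps)

lemma continuant_minus_2 [simp]: "continuant T (-2) = -1"
  by (simp add: continuant.simps)

lemma continuant_rec: "m \<ge> 0 \<Longrightarrow> continuant T m = continuant T (m - 1) * T (nat m) - continuant T (m - 2)"
  by (subst continuant.simps) simp

lemma continuant_0 [simp]: "continuant T 0 = 1"
  by (simp add: continuant_rec)

lemma continuant_cong:
  "(\<And>i. 1 \<le> i \<Longrightarrow> int i \<le> m \<Longrightarrow> T i = T' i) \<Longrightarrow> continuant T m = continuant T' m"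
proof (induction T m rule: continuant.induct)
  case (1 T m)
  show ?case
  proof (cases "m \<ge> 1")
    case True
    then show ?thesis
      using 1 "1.prems"[of "nat m"] by (simp add: continuant_rec[of m])
  next
    case False
    then consider "m \<le> -2" | "m = -1" | "m = 0" by linarith
    then show ?thesis by cases (simp_all add: continuant_below)
  qed
qed

lemma continuant_left_expansion:
  "m \<ge> 0 \<Longrightarrow> continuant T m
     = T 1 * continuant (\<lambda>i. T (i + 1)) (m - 1) - continuant (\<lambda>i. T (i + 2)) (m - 2)"
proof (induction T m rule: continuant.induct)
  case (1 T m)
  consider "m = 0" | "m = 1" | "m \<ge> 2" using "1.prems" by linarith
  then show ?case
  proof cases
    case 3
    have shift: "Suc (nat (m - 1)) = nat m" "Suc (Suc (nat (m - 2))) = nat m"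
      using 3 by auto
    have IH: "continuant T (m - 1) = T 1 * continuant (\<lambda>i. T (i + 1)) (m - 2) - continuant (\<lambda>i. T (i + 2)) (m - 3)"
      "continuant T (m - 2) = T 1 * continuant (\<lambda>i. T (i + 1)) (m - 3) - continuant (\<lambda>i. T (i + 2)) (m - 4)"
      using 1 3 by simp_all
    have "continuant T m = continuant T (m - 1) * T (nat m) - continuant T (m - 2)"
      using 3 by (simp add: continuant_rec)
    also have "\<dots> = T 1 * (continuant (\<lambda>i. T (i + 1)) (m - 2) * T (nat m)
        - continuant (\<lambda>i. T (i + 1)) (m - 3))
      - (continuant (\<lambda>i. T (i + 2)) (m - 3) * T (nat m) - continuant (\<lambda>i. T (i + 2)) (m - 4))"
      unfolding IH by (simp add: algebra_simps)
    also have "\<dots> = T 1 * continuant (\<lambda>i. T (i + 1)) (m - 1) - continuant (\<lambda>i. T (i + 2)) (m - 2)"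
      using 3 continuant_rec[of "m - 1" "\<lambda>i. T (i + 1)"] continuant_rec[of "m - 2" "\<lambda>i. T (i + 2)"]
      by (simp add: shift)
    finally show ?thesis .
  qed (simp_all add: continuant_rec)
qed

definition rev_continuant :: "(nat \<Rightarrow> 'a::ring_1) \<Rightarrow> int \<Rightarrow> 'a" where
  "rev_continuant T m = continuant (\<lambda>i. T (nat m + 1 - i)) m"

lemma rev_continuant_minus_1 [simp]: "rev_continuant T (-1) = 0"
  and rev_continuant_minus_2 [simp]: "rev_continuant T (-2) = -1"
  by (simp_all add: rev_continuant_def)

lemma rev_continuant_rec:
  assumes "m \<ge> 0"
  shows "rev_continuant T m = T (nat m) * rev_continuant T (m - 1) - rev_continuant T (m - 2)"
proof -
  have "continuant (\<lambda>i. T (nat m + 1 - (i + 1))) (m - 1) = rev_continuant T (m - 1)"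
    and "continuant (\<lambda>i. T (nat m + 1 - (i + 2))) (m - 2) = rev_continuant T (m - 2)"
    unfolding rev_continuant_def by (auto intro!: continuant_cong arg_cong[where f = T])
  then show ?thesis
    using continuant_left_expansion[OF assms, of "\<lambda>i. T (nat m + 1 - i)"] assms
    by (simp add: rev_continuant_def)
qed

lemma peval_psubst: "peval (psubst s f) T = peval f (\<lambda>i. peval (s i) T)"
  by (induction f) auto

lemma peval_epoly: "peval (epoly n) T = continuant T n"
proof (induction n rule: epoly.induct)
  case (1 n)
  have "peval (epoly n) T = (if n \<le> -2 then -1 else if n = -1 then 0 else if n = 0 then 1
      else peval (epoly (n - 1)) T * T (nat n) - peval (epoly (n - 2)) T)"
    by (subst epoly.simps) simp
  then show ?case
    using 1 by (simp add: continuant.simps[of T n])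
qed

lemma peval_e1: "peval (e1 n) T = continuant T n"
  by (simp add: e1_def peval_epoly)

lemma peval_et1: "peval (et1 n) T = rev_continuant T n"
  unfolding et1_def rev_continuant_def
  by (auto simp: peval_psubst peval_epoly intro!: continuant_cong)

locale jordan_continuants =
  fixes \<alpha> :: "'a::ring_1 \<Rightarrow> 'b::ring_1" and x :: "int \<Rightarrow> 'a"
    and p q :: "int \<Rightarrow> 'a" and P Q :: "int \<Rightarrow> 'b"
  assumes jordan: "jordan_hom \<alpha>"
    and init: "p (-2) = -1" "p (-1) = 0" "q (-2) = -1" "q (-1) = 0"
      "P (-2) = -1" "P (-1) = 0" "Q (-2) = -1" "Q (-1) = 0"
    and p_rec: "k \<ge> 0 \<Longrightarrow> p k = p (k - 1) * x k - p (k - 2)"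
    and q_rec: "k \<ge> 0 \<Longrightarrow> q k = x k * q (k - 1) - q (k - 2)"
    and P_rec: "k \<ge> 0 \<Longrightarrow> P k = P (k - 1) * \<alpha> (x k) - P (k - 2)"
    and Q_rec: "k \<ge> 0 \<Longrightarrow> Q k = \<alpha> (x k) * Q (k - 1) - Q (k - 2)"
begin

definition sandwich_at :: "int \<Rightarrow> bool" where
  "sandwich_at k \<longleftrightarrow> (\<forall>y. \<alpha> (p k * y * q k) = P k * \<alpha> y * Q k)"

definition mixed_at :: "int \<Rightarrow> bool" where
  "mixed_at k \<longleftrightarrow> (\<forall>a b. \<alpha> (p k * (a * b) * q (k - 1) + p (k - 1) * (b * a) * q k)
     = P k * (\<alpha> a * \<alpha> b) * Q (k - 1) + P (k - 1) * (\<alpha> b * \<alpha> a) * Q k)"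

lemma sandwich_at_step:
  assumes k: "k \<ge> 0" and "sandwich_at (k - 2)" "sandwich_at (k - 1)" "mixed_at (k - 1)"
  shows "sandwich_at k"
  unfolding sandwich_at_def
proof
  fix y
  have "p k * y * q k = p (k - 1) * (x k * y * x k) * q (k - 1) + p (k - 2) * y * q (k - 2)
      - (p (k - 1) * (x k * y) * q (k - 1 - 1) + p (k - 1 - 1) * (y * x k) * q (k - 1))"
    using k by (simp add: p_rec q_rec algebra_simps)
  moreover have "P k * \<alpha> y * Q k
      = P (k - 1) * (\<alpha> (x k) * \<alpha> y * \<alpha> (x k)) * Q (k - 1) + P (k - 2) * \<alpha> y * Q (k - 2)
      - (P (k - 1) * (\<alpha> (x k) * \<alpha> y) * Q (k - 1 - 1) + P (k - 1 - 1) * (\<alpha> y * \<alpha> (x k)) * Q (k - 1))"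
    using k by (simp add: P_rec Q_rec algebra_simps)
  ultimately show "\<alpha> (p k * y * q k) = P k * \<alpha> y * Q k"
    using assms jordan by (simp add: jordan_hom_diff jordan_hom_add jordan_hom_aba
      sandwich_at_def mixed_at_def)
qed

lemma mixed_at_step:
  assumes k: "k \<ge> 0" and "sandwich_at (k - 1)" "mixed_at (k - 1)"
  shows "mixed_at k"
  unfolding mixed_at_def
proof (intro allI)
  fix a b
  have "p k * (a * b) * q (k - 1) + p (k - 1) * (b * a) * q k
      = p (k - 1) * (x k * a * b + b * a * x k) * q (k - 1)
      - (p (k - 1) * (b * a) * q (k - 1 - 1) + p (k - 1 - 1) * (a * b) * q (k - 1))"
    using k by (simp add: p_rec q_rec algebra_simps)
  moreover have "P k * (\<alpha> a * \<alpha> b) * Q (k - 1) + P (k - 1) * (\<alpha> b * \<alpha> a) * Q k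
      = P (k - 1) * (\<alpha> (x k) * \<alpha> a * \<alpha> b + \<alpha> b * \<alpha> a * \<alpha> (x k)) * Q (k - 1)
      - (P (k - 1) * (\<alpha> b * \<alpha> a) * Q (k - 1 - 1) + P (k - 1 - 1) * (\<alpha> a * \<alpha> b) * Q (k - 1))"
    using k by (simp add: P_rec Q_rec algebra_simps)
  ultimately show "\<alpha> (p k * (a * b) * q (k - 1) + p (k - 1) * (b * a) * q k)
      = P k * (\<alpha> a * \<alpha> b) * Q (k - 1) + P (k - 1) * (\<alpha> b * \<alpha> a) * Q k"
    using assms jordan by (simp add: jordan_hom_diff jordan_hom_abc_cba
      sandwich_at_def mixed_at_def)
qed

lemma sandwich:
  assumes "k \<ge> -2"
  shows "\<alpha> (p k * y * q k) = P k * \<alpha> y * Q k"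
proof -
  have "sandwich_at (i - 1) \<and> sandwich_at i \<and> mixed_at i" if "i \<ge> -1" for i
    using that
  proof (induction i rule: int_ge_induct)
    case base
    show ?case
      using jordan by (simp add: sandwich_at_def mixed_at_def init jordan_hom_0)
  next
    case (step i)
    then show ?case
      using sandwich_at_step[of "i + 1"] mixed_at_step[of "i + 1"] by simp
  qed
  from this[of "k + 1"] assms show ?thesis
    by (simp add: sandwich_at_def)
qed

end

theorem proposition3p4:
  fixes n :: int and \<alpha> :: "'a::ring_1 \<Rightarrow> 'b::ring_1"
  assumes "n \<ge> -2" and "jordan_hom \<alpha>"
  shows "jordan_prop_wrt \<alpha> (PMul (e1 n) (et1 n))"
  unfolding jordan_prop_wrt_def
proof
  fix T :: "nat \<Rightarrow> 'a"
  interpret jordan_continuants \<alpha> "\<lambda>k. T (nat k)" "continuant T" "rev_continuant T"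
    "continuant (\<alpha> \<circ> T)" "rev_continuant (\<alpha> \<circ> T)"
    using assms(2) by unfold_locales (simp_all add: continuant_rec rev_continuant_rec)
  show "\<alpha> (peval (PMul (e1 n) (et1 n)) T) = peval (PMul (e1 n) (et1 n)) (\<alpha> \<circ> T)"
    using sandwich[OF assms(1), of 1] assms(2) by (simp add: peval_e1 peval_et1 jordan_hom_1)
qed

end
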